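(* An element $f\in C(X)_\mathcal{P}$ is almost clean (i.e. $f=r+e$ with $r$ a regular element, meaning a non-zero-divisor, and $e$ an idempotent of $C(X)_\mathcal{P}$) if and only if there exists a $\tau\mathcal{P}$-clopen subset $U$ of $X$ such that \[ int_{X_\mathcal{P}}(f^{-1}(\{1\}))\subseteq U\subseteq cl_{X_\mathcal{P}}(coz(f)). \]
   Context: Let $(X,\tau)$ be a $T_1$ topological space and $\mathcal{P}$ an ideal of closed subsets of $X$ (a nonempty family of closed sets closed under finite unions and under taking closed subsets). For $f\colon X\to\mathbb{R}$, $D_f$ denotes the set of points of discontinuity of $f$, and $C(X)_\mathcal{P}=\{f\colon X\to\mathbb{R} : \overline{D_f}\in\mathcal{P}\}$, a commutative ring with unity under pointwise operations. For $f\in C(X)_\mathcal{P}$, $Z_\mathcal{P}(f)=\{x: f(x)=0\}$ and $coz(f)=X\setminus Z_\mathcal{P}(f)$. $X_\mathcal{P}$ is $X$ with the topology having base $\{coz(f): f\in C(X)_\mathcal{P}\}$; $int_{X_\mathcal{P}}$ and $cl_{X_\mathcal{P}}$ are interior and closure in $X_\mathcal{P}$. A set $U\subseteq X$ is $\tau\mathcal{P}$-clopen if $U=Z_\mathcal{P}(f)=X\setminus Z_\mathcal{P}(g)$ for some $f,g\in C(X)_\mathcal{P}$. *)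

theory Defs
  imports "HOL-Analysis.Analysis"
begin

definition closed_ideal :: "'a::topological_space set set \<Rightarrow> bool" where
  "closed_ideal P \<longleftrightarrow> P \<noteq> {} \<and> (\<forall>A\<in>P. closed A) \<and>
     (\<forall>A B. A \<in> P \<longrightarrow> B \<in> P \<longrightarrow> A \<union> B \<in> P) \<and>
     (\<forall>A B. A \<in> P \<longrightarrow> closed B \<longrightarrow> B \<subseteq> A \<longrightarrow> B \<in> P)"

definition discont :: "('a::topological_space \<Rightarrow> real) \<Rightarrow> 'a set" where
  "discont f = {x. \<not> (f \<longlongrightarrow> f x) (at x)}"

definition CP :: "'a::topological_space set set \<Rightarrow> ('a \<Rightarrow> real) set" where
  "CP P = {f. closure (discont f) \<in> P}"

definition ZP :: "('a \<Rightarrow> real) \<Rightarrow> 'a set" where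
  "ZP f = {x. f x = 0}"

definition coz :: "('a \<Rightarrow> real) \<Rightarrow> 'a set" where
  "coz f = {x. f x \<noteq> 0}"

definition XP :: "'a::topological_space set set \<Rightarrow> 'a topology" where
  "XP P = topology_generated_by {coz f | f. f \<in> CP P}"

definition regular_elem :: "'a::topological_space set set \<Rightarrow> ('a \<Rightarrow> real) \<Rightarrow> bool" where
  "regular_elem P r \<longleftrightarrow> r \<in> CP P \<and>
     (\<forall>s\<in>CP P. (\<lambda>x. r x * s x) = (\<lambda>x. 0) \<longrightarrow> s = (\<lambda>x. 0))"

definition idempotent_elem :: "'a::topological_space set set \<Rightarrow> ('a \<Rightarrow> real) \<Rightarrow> bool" where
  "idempotent_elem P e \<longleftrightarrow> e \<in> CP P \<and> (\<lambda>x. e x * e x) = e"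

definition almost_clean :: "'a::topological_space set set \<Rightarrow> ('a \<Rightarrow> real) \<Rightarrow> bool" where
  "almost_clean P f \<longleftrightarrow>
     (\<exists>r e. regular_elem P r \<and> idempotent_elem P e \<and> f = (\<lambda>x. r x + e x))"

definition tauP_clopen :: "'a::topological_space set set \<Rightarrow> 'a set \<Rightarrow> bool" where
  "tauP_clopen P U \<longleftrightarrow> (\<exists>f\<in>CP P. \<exists>g\<in>CP P. U = ZP f \<and> U = - ZP g)"

end

theory Submission
  imports Defs
begin

text \<open>Idempotents of C(X)_P are the indicators of \<tau>P-clopen sets, and an element r is regular
  exactly when its zero set has empty interior in X_P (a nonzero s with r s = 0 would have an
  open cozero set inside Z(r), and conversely every open set contains a basic cozero set).
  So f = r + e with e the indicator of A is almost clean iff the zero set of f - 1_A, which is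
  f^{-1}(1) on A and Z(f) off A, has empty interior; since A is clopen in X_P this splits into
  int(f^{-1}(1)) \<subseteq> -A and int(Z(f)) \<subseteq> A, i.e. -A \<subseteq> cl(coz f).\<close>

lemma closed_ideal_Un: "closed_ideal P \<Longrightarrow> A \<in> P \<Longrightarrow> B \<in> P \<Longrightarrow> A \<union> B \<in> P"
  unfolding closed_ideal_def by blast

lemma closed_ideal_closed_subset:
  "closed_ideal P \<Longrightarrow> A \<in> P \<Longrightarrow> closed B \<Longrightarrow> B \<subseteq> A \<Longrightarrow> B \<in> P"
  unfolding closed_ideal_def by blast

lemma CP_of_discont_subset:
  assumes P: "closed_ideal P" and f: "f \<in> CP P" and g: "g \<in> CP P"
    and sub: "discont h \<subseteq> discont f \<union> discont g"
  shows "h \<in> CP P"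
proof -
  have "closure (discont h) \<subseteq> closure (discont f) \<union> closure (discont g)"
    using closure_mono[OF sub] by (simp add: closure_Un)
  moreover have "closure (discont f) \<union> closure (discont g) \<in> P"
    using f g by (intro closed_ideal_Un[OF P]) (simp_all add: CP_def)
  ultimately show ?thesis
    using closed_ideal_closed_subset[OF P] by (simp add: CP_def)
qed

lemma const_in_CP:
  assumes P: "closed_ideal P"
  shows "(\<lambda>x. c) \<in> CP P"
proof -
  obtain A where "A \<in> P" using P by (auto simp: closed_ideal_def)
  then have "{} \<in> P" by (rule closed_ideal_closed_subset[OF P]) auto
  moreover have "discont (\<lambda>x::'a. c) = {}" by (simp add: discont_def)
  ultimately show ?thesis by (simp add: CP_def)
qed

lemma CP_diff: "closed_ideal P \<Longrightarrow> f \<in> CP P \<Longrightarrow> g \<in> CP P \<Longrightarrow> (\<lambda>x. f x - g x) \<in> CP P"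
  by (rule CP_of_discont_subset[of P f g]) (auto simp: discont_def intro: tendsto_diff)

lemma CP_mult: "closed_ideal P \<Longrightarrow> f \<in> CP P \<Longrightarrow> g \<in> CP P \<Longrightarrow> (\<lambda>x. f x * g x) \<in> CP P"
  by (rule CP_of_discont_subset[of P f g]) (auto simp: discont_def intro: tendsto_mult)

lemma tauP_clopen_Compl: "tauP_clopen P U \<Longrightarrow> tauP_clopen P (- U)"
proof -
  assume "tauP_clopen P U"
  then obtain f g where "f \<in> CP P" "g \<in> CP P" "U = ZP f" "U = - ZP g"
    by (auto simp: tauP_clopen_def)
  then have "- U = ZP g" "- U = - ZP f" by auto
  with \<open>f \<in> CP P\<close> \<open>g \<in> CP P\<close> show ?thesis by (auto simp: tauP_clopen_def)
qed

lemma indicator_in_CP: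
  fixes P :: "'a::topological_space set set"
  assumes P: "closed_ideal P" and U: "tauP_clopen P U"
  shows "(indicator U :: 'a \<Rightarrow> real) \<in> CP P"
proof -
  obtain f g where f: "f \<in> CP P" and g: "g \<in> CP P" and Uf: "U = ZP f" and Ug: "U = - ZP g"
    using U by (auto simp: tauP_clopen_def)
  have "discont (indicator U :: 'a \<Rightarrow> real) \<subseteq> discont f \<union> discont g"
  proof
    fix x assume x: "x \<in> discont (indicator U :: 'a \<Rightarrow> real)"
    show "x \<in> discont f \<union> discont g"
    proof (rule ccontr)
      assume "x \<notin> discont f \<union> discont g"
      then have cf: "(f \<longlongrightarrow> f x) (at x)" and cg: "(g \<longlongrightarrow> g x) (at x)"
        by (auto simp: discont_def)
      have "\<forall>\<^sub>F y in at x. y \<in> U \<longleftrightarrow> x \<in> U"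
      proof (cases "x \<in> U")
        case True
        with Ug have "g x \<noteq> 0" by (auto simp: ZP_def)
        with cg have "\<forall>\<^sub>F y in at x. g y \<noteq> 0" by (rule tendsto_imp_eventually_ne)
        then show ?thesis by (rule eventually_mono) (use True Ug in \<open>auto simp: ZP_def\<close>)
      next
        case False
        with Uf have "f x \<noteq> 0" by (auto simp: ZP_def)
        with cf have "\<forall>\<^sub>F y in at x. f y \<noteq> 0" by (rule tendsto_imp_eventually_ne)
        then show ?thesis by (rule eventually_mono) (use False Uf in \<open>auto simp: ZP_def\<close>)
      qed
      then have "\<forall>\<^sub>F y in at x. (indicator U y :: real) = indicator U x"
        by (rule eventually_mono) (simp add: indicator_def)
      then have "((indicator U :: 'a \<Rightarrow> real) \<longlongrightarrow> indicator U x) (at x)"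
        by (rule tendsto_eventually)
      with x show False by (simp add: discont_def)
    qed
  qed
  then show ?thesis by (rule CP_of_discont_subset[OF P f g])
qed

lemma idempotent_elem_iff_indicator:
  assumes P: "closed_ideal P"
  shows "idempotent_elem P e \<longleftrightarrow> (\<exists>A. tauP_clopen P A \<and> e = indicator A)"
proof
  assume e: "idempotent_elem P e"
  then have eC: "e \<in> CP P" and idem: "e x * e x = e x" for x
    by (auto simp: idempotent_elem_def fun_eq_iff)
  have zero_or_one: "e x = 0 \<or> e x = 1" for x
    using idem[of x] by (cases "e x = 0") auto
  have "(\<lambda>x. 1 - e x) \<in> CP P" by (rule CP_diff[OF P const_in_CP[OF P] eC])
  moreover have "coz e = ZP (\<lambda>x. 1 - e x)" "coz e = - ZP e"
    using zero_or_one by (auto simp: coz_def ZP_def)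
  ultimately have "tauP_clopen P (coz e)"
    using eC unfolding tauP_clopen_def by blast
  moreover have "e = indicator (coz e)"
    using zero_or_one by (auto simp: coz_def indicator_def fun_eq_iff)
  ultimately show "\<exists>A. tauP_clopen P A \<and> e = indicator A" by blast
next
  assume "\<exists>A. tauP_clopen P A \<and> e = indicator A"
  then obtain A where "tauP_clopen P A" and e: "e = indicator A" by blast
  then have "e \<in> CP P" using indicator_in_CP[OF P] by blast
  moreover have "(\<lambda>x. e x * e x) = e" by (simp add: e indicator_def fun_eq_iff)
  ultimately show "idempotent_elem P e" by (simp add: idempotent_elem_def)
qed

lemma coz_openin_XP: "f \<in> CP P \<Longrightarrow> openin (XP P) (coz f)"
  unfolding XP_def openin_topology_generated_by_iff
  by (rule generate_topology_on.Basis) blast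

lemma tauP_clopen_openin_XP: "tauP_clopen P U \<Longrightarrow> openin (XP P) U"
proof -
  assume "tauP_clopen P U"
  then obtain g where "g \<in> CP P" "U = - ZP g" by (auto simp: tauP_clopen_def)
  moreover have "- ZP g = coz g" by (auto simp: ZP_def coz_def)
  ultimately show ?thesis using coz_openin_XP by simp
qed

lemma topspace_XP:
  assumes P: "closed_ideal P"
  shows "topspace (XP P) = UNIV"
proof -
  have "coz (\<lambda>x. 1) \<in> {coz f | f. f \<in> CP P}" "coz (\<lambda>x::'a. 1::real) = UNIV"
    using const_in_CP[OF P] by (auto simp: coz_def)
  then show ?thesis unfolding XP_def topology_generated_by_topspace by blast
qed

lemma openin_XP_imp_coz_nbhd:
  assumes P: "closed_ideal P" and V: "openin (XP P) V" and x: "x \<in> V"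
  shows "\<exists>s\<in>CP P. x \<in> coz s \<and> coz s \<subseteq> V"
proof -
  have "generate_topology_on {coz f | f. f \<in> CP P} V"
    using V by (simp add: XP_def openin_topology_generated_by_iff)
  then show ?thesis using x
  proof (induction arbitrary: x rule: generate_topology_on.induct)
    case (Int a b)
    then obtain s1 s2 where "s1 \<in> CP P" "x \<in> coz s1" "coz s1 \<subseteq> a"
      and "s2 \<in> CP P" "x \<in> coz s2" "coz s2 \<subseteq> b" by blast
    moreover have "coz (\<lambda>y. s1 y * s2 y) = coz s1 \<inter> coz s2" by (auto simp: coz_def)
    ultimately show ?case using CP_mult[OF P, of s1 s2]
      by (intro bexI[of _ "\<lambda>y. s1 y * s2 y"]) auto
  next
    case (UN K)
    then obtain k where "k \<in> K" "x \<in> k" by blast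
    with UN.IH show ?case by blast
  qed blast+
qed

lemma XP_closure_of_coz:
  "closed_ideal P \<Longrightarrow> XP P closure_of coz f = - (XP P interior_of ZP f)"
  by (simp add: closure_of_interior_of topspace_XP Compl_eq_Diff_UNIV[symmetric])
     (simp add: coz_def ZP_def Collect_neg_eq)

lemma regular_elem_iff_interior_of_ZP_empty:
  assumes P: "closed_ideal P" and r: "r \<in> CP P"
  shows "regular_elem P r \<longleftrightarrow> XP P interior_of ZP r = {}"
proof
  assume reg: "regular_elem P r"
  show "XP P interior_of ZP r = {}"
  proof (rule ccontr)
    assume "XP P interior_of ZP r \<noteq> {}"
    then obtain x where x: "x \<in> XP P interior_of ZP r" by blast
    obtain s where s: "s \<in> CP P" and xs: "x \<in> coz s"
      and sub: "coz s \<subseteq> XP P interior_of ZP r"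
      using openin_XP_imp_coz_nbhd[OF P openin_interior_of x] by blast
    have "coz s \<subseteq> ZP r" using sub interior_of_subset[of "XP P" "ZP r"] by (rule order_trans)
    then have "(\<lambda>y. r y * s y) = (\<lambda>y. 0)" by (auto simp: coz_def ZP_def fun_eq_iff)
    with reg s have "s = (\<lambda>y. 0)" by (simp add: regular_elem_def)
    with xs show False by (simp add: coz_def)
  qed
next
  assume empty: "XP P interior_of ZP r = {}"
  show "regular_elem P r"
    unfolding regular_elem_def
  proof (intro conjI r ballI impI)
    fix s assume s: "s \<in> CP P" and "(\<lambda>x. r x * s x) = (\<lambda>x. 0)"
    then have "coz s \<subseteq> ZP r" by (auto simp: coz_def ZP_def fun_eq_iff)
    then have "coz s \<subseteq> XP P interior_of ZP r"
      using coz_openin_XP[OF s] by (rule interior_of_maximal)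
    with empty show "s = (\<lambda>x. 0)" by (auto simp: coz_def fun_eq_iff)
  qed
qed

lemma interior_of_clopen_split:
  assumes A: "openin X A" and nA: "openin X (- A)"
  shows "X interior_of ((A \<inter> B) \<union> (- A \<inter> C)) = (A \<inter> X interior_of B) \<union> (- A \<inter> X interior_of C)"
    (is "X interior_of ?S = _")
proof (rule equalityI)
  have S: "X interior_of ?S \<subseteq> ?S" by (rule interior_of_subset)
  have "A \<inter> X interior_of ?S \<subseteq> X interior_of B"
    by (rule interior_of_maximal) (use S openin_Int[OF A openin_interior_of] in blast)+
  moreover have "- A \<inter> X interior_of ?S \<subseteq> X interior_of C"
    by (rule interior_of_maximal) (use S openin_Int[OF nA openin_interior_of] in blast)+
  ultimately show "X interior_of ?S \<subseteq> (A \<inter> X interior_of B) \<union> (- A \<inter> X interior_of C)"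
    by blast
next
  have "A \<inter> X interior_of B \<subseteq> X interior_of ?S"
    by (rule interior_of_maximal)
       (use interior_of_subset[of X B] openin_Int[OF A openin_interior_of] in blast)+
  moreover have "- A \<inter> X interior_of C \<subseteq> X interior_of ?S"
    by (rule interior_of_maximal)
       (use interior_of_subset[of X C] openin_Int[OF nA openin_interior_of] in blast)+
  ultimately show "(A \<inter> X interior_of B) \<union> (- A \<inter> X interior_of C) \<subseteq> X interior_of ?S"
    by blast
qed

lemma ZP_diff_indicator: "ZP (\<lambda>x. f x - indicator A x) = (A \<inter> f -` {1}) \<union> (- A \<inter> ZP f)"
  by (auto simp: ZP_def indicator_def)

lemma regular_elem_diff_indicator_iff:
  assumes P: "closed_ideal P" and f: "f \<in> CP P" and A: "tauP_clopen P A"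
  shows "regular_elem P (\<lambda>x. f x - indicator A x) \<longleftrightarrow>
    XP P interior_of (f -` {1}) \<subseteq> - A \<and> - A \<subseteq> XP P closure_of (coz f)"
proof -
  have "(\<lambda>x. f x - indicator A x) \<in> CP P"
    by (rule CP_diff[OF P f indicator_in_CP[OF P A]])
  moreover have "XP P interior_of ZP (\<lambda>x. f x - indicator A x) =
      (A \<inter> XP P interior_of (f -` {1})) \<union> (- A \<inter> XP P interior_of ZP f)"
    unfolding ZP_diff_indicator
    by (rule interior_of_clopen_split)
       (use A tauP_clopen_Compl tauP_clopen_openin_XP in blast)+
  ultimately show ?thesis
    by (auto simp: regular_elem_iff_interior_of_ZP_empty[OF P] XP_closure_of_coz[OF P])
qed

lemma almost_clean_iff_regular_diff_indicator:
  assumes P: "closed_ideal P"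
  shows "almost_clean P f \<longleftrightarrow>
    (\<exists>A. tauP_clopen P A \<and> regular_elem P (\<lambda>x. f x - indicator A x))"
proof
  assume "almost_clean P f"
  then obtain r A where "regular_elem P r" "tauP_clopen P A" "f = (\<lambda>x. r x + indicator A x)"
    by (auto simp: almost_clean_def idempotent_elem_iff_indicator[OF P])
  then show "\<exists>A. tauP_clopen P A \<and> regular_elem P (\<lambda>x. f x - indicator A x)" by auto
next
  assume "\<exists>A. tauP_clopen P A \<and> regular_elem P (\<lambda>x. f x - indicator A x)"
  then obtain A where "tauP_clopen P A" "regular_elem P (\<lambda>x. f x - indicator A x)" by blast
  then show "almost_clean P f"
    unfolding almost_clean_def idempotent_elem_iff_indicator[OF P]
    by (intro exI[of _ "\<lambda>x. f x - indicator A x"] exI[of _ "indicator A"]) auto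
qed

theorem theorem3p11:
  fixes P :: "'a::t1_space set set" and f :: "'a \<Rightarrow> real"
  assumes "closed_ideal P" and "f \<in> CP P"
  shows "almost_clean P f \<longleftrightarrow>
    (\<exists>U. tauP_clopen P U \<and>
         (XP P) interior_of (f -` {1}) \<subseteq> U \<and> U \<subseteq> (XP P) closure_of (coz f))"
proof -
  have "almost_clean P f \<longleftrightarrow> (\<exists>A. tauP_clopen P A \<and>
      XP P interior_of (f -` {1}) \<subseteq> - A \<and> - A \<subseteq> XP P closure_of (coz f))"
    using almost_clean_iff_regular_diff_indicator[OF assms(1)]
      regular_elem_diff_indicator_iff[OF assms] by blast
  also have "\<dots> \<longleftrightarrow> (\<exists>U. tauP_clopen P U \<and>
      XP P interior_of (f -` {1}) \<subseteq> U \<and> U \<subseteq> XP P closure_of (coz f))"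
    using tauP_clopen_Compl double_complement by (metis (no_types, lifting))
  finally show ?thesis .
qed

end
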